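(* In the half plane $\mathrm{Re}(s)>\max(1,\sigma_c)$, we have \begin{equation*} (\zeta(s)-1)\varphi(s)^2+\zeta(s)\varphi(s)-\zeta(s)(\zeta(s)-1)=0. \end{equation*}
   Context: For $m,k\in\mathbf{N}$ let $\alpha_k(m)$ be the number of $k$-tuples $(m_1,\dots,m_k)$ of integers $m_i\geq 2$ with $m_1m_2\cdots m_k=m$. Define integers $b_n$ recursively by $b_0=b_1=1$ and $b_n+\sum_{i,j\geq 1,\ i+j=n}b_ib_j=0$ for $n\geq 2$. Let $$a_n=\alpha_1(n)+\sum_{\ell\geq 4}(-1)^\ell\alpha_{\ell-1}(n)\sum_{k=2}^{\lfloor \ell/2\rfloor}b_k\binom{\ell-k-2}{k-2},$$ (with $\binom{a}{b}=0$ unless $a\geq b\geq 0$) and let $\varphi(s)=\sum_{n=1}^\infty a_nn^{-s}$, with abscissa of conditional convergence $\sigma_c$. Here $\zeta(s)$ is the Riemann zeta function. *)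

theory Defs
  imports "HOL-Analysis.Analysis"
begin

definition alpha :: "nat \<Rightarrow> nat \<Rightarrow> nat" where
  "alpha k m = card {xs :: int list. length xs = k \<and> (\<forall>x\<in>set xs. x \<ge> 2) \<and> prod_list xs = int m}"

function b :: "nat \<Rightarrow> int" where
  "b n = (if n \<le> 1 then 1 else - (\<Sum>i\<in>{1..<n}. b i * b (n - i)))"
  by auto
termination
  by (relation "Wellfounded.measure id") auto

definition a :: "nat \<Rightarrow> int" where
  "a n = int (alpha 1 n) +
     (\<Sum>\<^sub>\<infinity>l\<in>{4::nat..}. (-1) ^ l * int (alpha (l - 1) n) *
         (\<Sum>k=2..l div 2. b k * int ((l - k - 2) choose (k - 2))))"

definition phi :: "complex \<Rightarrow> complex" where
  "phi s = (\<Sum>n. of_int (a (Suc n)) / (of_nat (Suc n)) powr s)"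

definition sigma_c :: ereal where
  "sigma_c = Inf {ereal (Re s) | s. summable (\<lambda>n. of_int (a (Suc n)) / (of_nat (Suc n) :: complex) powr s)}"

text \<open>Riemann zeta function, via its Dirichlet series (used only for Re s > 1).\<close>
definition zeta :: "complex \<Rightarrow> complex" where
  "zeta s = (\<Sum>n. 1 / (of_nat (Suc n)) powr s)"

end

theory Submission
  imports Defs "HOL-Complex_Analysis.Complex_Analysis"
begin

(*
  Write X = zeta s - 1 = (sum over m >= 2 of m^-s).  Expanding X^k gives the Dirichlet series
  sum_n alpha_k(n) n^-s, so for Re s >= 10, where everything converges absolutely,
  phi s = E X for the power series E = sum_k e_k x^k whose coefficient e_k is the weight with which
  alpha_k enters a_n.  The recursion for b says that B = sum_n b_(n+1) x^n satisfies
  B + x B^2 = 1, and E = x B(x^2/(1+x)); hence x E^2 + (1+x) E - x (1+x) = 0, which at x = X is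
  the claimed identity.  A Dirichlet series that converges at s0 is holomorphic for
  Re s > Re s0 (by partial summation), so both sides are holomorphic on Re s > max 1 sigma_c and
  the identity propagates from Re s >= 10 by analytic continuation.
*)

section \<open>Dirichlet series\<close>

lemma norm_powr_Suc_diff_le:
  fixes w :: complex and n :: nat
  assumes "Re w > 0" and "n \<ge> 1"
  shows "norm (of_nat (Suc n) powr (-w) - of_nat n powr (-w)) \<le> norm w * real n powr (-Re w - 1)"
proof -
  define S where "S = {z. z \<in> \<real> \<and> Re z \<ge> real n \<and> Re z \<le> real n + 1}"
  have "convex S"
  proof -
    have "S = {z. Im z \<ge> 0} \<inter> {z. Im z \<le> 0} \<inter> {z. Re z \<ge> real n} \<inter> {z. Re z \<le> real n + 1}"
      by (auto simp: S_def complex_is_Real_iff)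
    then show ?thesis
      by (simp only: convex_Int convex_halfspace_Re_ge convex_halfspace_Re_le
          convex_halfspace_Im_ge convex_halfspace_Im_le)
  qed
  then have "norm (of_nat (Suc n) powr (-w) - of_nat n powr (-w))
      \<le> (norm w * real n powr (-Re w - 1)) * norm (of_nat (Suc n) - (of_nat n :: complex))"
  proof (rule field_differentiable_bound)
    fix z assume z: "z \<in> S"
    then have "Re z \<ge> real n" and "z \<in> \<real>"
      by (simp_all add: S_def)
    then have "Re z > 0" using assms(2) by linarith
    then have "z \<notin> \<real>\<^sub>\<le>\<^sub>0" by (auto simp: complex_nonpos_Reals_iff)
    then show "((\<lambda>x. x powr (-w)) has_field_derivative (-w * z powr (-w - 1))) (at z within S)"
      by (rule has_field_derivative_at_within[OF has_field_derivative_powr])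
    have "norm (-w * z powr (-w - 1)) = norm w * Re z powr (-Re w - 1)"
      using \<open>z \<in> \<real>\<close> \<open>Re z > 0\<close> by (simp add: norm_mult norm_powr_real_powr)
    also have "\<dots> \<le> norm w * real n powr (-Re w - 1)"
      using \<open>Re z \<ge> real n\<close> assms by (intro mult_left_mono powr_mono2') auto
    finally show "norm (-w * z powr (-w - 1)) \<le> norm w * real n powr (-Re w - 1)" .
  qed (auto simp: S_def)
  moreover have "norm (of_nat (Suc n) - (of_nat n :: complex)) = 1"
    by simp
  ultimately show ?thesis
    by (simp only: mult_1_right)
qed

lemma sums_mult_by_parts:
  fixes u v :: "nat \<Rightarrow> 'a::{real_normed_field,banach}"
  defines "R \<equiv> \<lambda>n. \<Sum>m. u (m + n)"
  assumes u: "summable u" and v: "Bseq v"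
    and T: "summable (\<lambda>n. R (Suc n) * (v (Suc n) - v n))"
  shows "(\<lambda>n. u n * v n) sums (R 0 * v 0 + (\<Sum>n. R (Suc n) * (v (Suc n) - v n)))"
proof -
  have R_Suc: "u n = R n - R (Suc n)" for n
    using suminf_split_head[of "\<lambda>m. u (m + n)"] u by (simp add: R_def summable_iff_shift)
  have "R \<longlonglongrightarrow> 0"
    unfolding R_def using u by (rule suminf_exist_split2)
  then have "(\<lambda>N. R (Suc N)) \<longlonglongrightarrow> 0"
    by (simp add: LIMSEQ_Suc)
  then have "Zfun (\<lambda>N. R (Suc N)) sequentially"
    by (simp add: tendsto_Zfun_iff)
  then have "Zfun (\<lambda>N. R (Suc N) * v N) sequentially"
    using v by (rule bounded_bilinear.Zfun_prod_Bfun[OF bounded_bilinear_mult])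
  then have tail: "(\<lambda>N. R (Suc N) * v N) \<longlonglongrightarrow> 0"
    by (simp add: tendsto_Zfun_iff)
  have partial: "(\<Sum>n<Suc N. u n * v n) =
      R 0 * v 0 - R (Suc N) * v N + (\<Sum>n<N. R (Suc n) * (v (Suc n) - v n))" for N
  proof (induction N)
    case (Suc N)
    show ?case
      unfolding sum.lessThan_Suc[of _ "Suc N"] Suc.IH R_Suc[of "Suc N"]
      by (simp add: algebra_simps)
  qed (simp add: R_Suc algebra_simps)
  have "(\<lambda>N. R 0 * v 0 - R (Suc N) * v N + (\<Sum>n<N. R (Suc n) * (v (Suc n) - v n)))
      \<longlonglongrightarrow> R 0 * v 0 - 0 + (\<Sum>n. R (Suc n) * (v (Suc n) - v n))"
    by (intro tendsto_intros tail summable_LIMSEQ T)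
  then have "(\<lambda>N. \<Sum>n<Suc N. u n * v n) \<longlonglongrightarrow> R 0 * v 0 + (\<Sum>n. R (Suc n) * (v (Suc n) - v n))"
    by (simp only: partial diff_zero)
  then show ?thesis
    unfolding sums_def by (rule LIMSEQ_imp_Suc)
qed

lemma Bseq_suminf_tails:
  fixes f :: "nat \<Rightarrow> 'a::real_normed_vector"
  shows "summable f \<Longrightarrow> Bseq (\<lambda>n. \<Sum>m. f (m + n))"
  using suminf_exist_split2 convergent_imp_Bseq convergent_def by blast

lemma summable_Suc_powr: "x > 0 \<Longrightarrow> summable (\<lambda>n. real (Suc n) powr (- x - 1))"
  using summable_Suc_iff[of "\<lambda>n. real n powr (- x - 1)"] by (simp add: summable_real_powr_iff)

lemma norm_powr_diff_series_term_le:
  fixes s0 z :: complex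
  assumes "norm r \<le> M" and "Re z > Re s0"
  shows "norm (r * (of_nat (Suc (Suc n)) powr (s0 - z) - of_nat (Suc n) powr (s0 - z)))
    \<le> M * (norm (z - s0) * real (Suc n) powr (- Re (z - s0) - 1))"
  using assms norm_powr_Suc_diff_le[of "z - s0" "Suc n"] order_trans[OF norm_ge_zero assms(1)]
  by (simp only: norm_mult minus_diff_eq) (intro mult_mono; simp del: of_nat_Suc)

lemma mem_cball_diff_bounds:
  fixes z z0 w :: complex
  assumes "z \<in> cball z0 d"
  shows "Re (z - w) \<ge> Re (z0 - w) - d" and "norm (z - w) \<le> norm (z0 - w) + d"
proof -
  have "norm (z0 - z) \<le> d"
    using assms by (simp add: dist_norm)
  then show "Re (z - w) \<ge> Re (z0 - w) - d"
    using abs_Re_le_cmod[of "z0 - z"] by simp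
  show "norm (z - w) \<le> norm (z0 - w) + d"
    using norm_triangle_ineq[of "z - z0" "z0 - w"] \<open>norm (z0 - z) \<le> d\<close>
    by (simp add: norm_minus_commute)
qed

lemma powr_diff_series:
  fixes r :: "nat \<Rightarrow> complex" and s0 :: complex
  assumes r: "\<And>n. norm (r n) \<le> M"
  defines "T \<equiv> \<lambda>z n. r n * (of_nat (Suc (Suc n)) powr (s0 - z) - of_nat (Suc n) powr (s0 - z))"
  shows summable_powr_diff_series: "\<And>z. Re z > Re s0 \<Longrightarrow> summable (T z)"
    and holomorphic_powr_diff_series: "(\<lambda>z. \<Sum>n. T z n) holomorphic_on {z. Re z > Re s0}"
proof -
  show "summable (T z)" if "Re z > Re s0" for z
  proof (rule summable_comparison_test'[where N = 0])
    show "summable (\<lambda>n. M * (norm (z - s0) * real (Suc n) powr (- Re (z - s0) - 1)))"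
      using summable_Suc_powr[of "Re (z - s0)"] that by (intro summable_mult) simp
    show "norm (T z n) \<le> M * (norm (z - s0) * real (Suc n) powr (- Re (z - s0) - 1))" for n
      unfolding T_def using r that by (rule norm_powr_diff_series_term_le)
  qed
  show "(\<lambda>z. \<Sum>n. T z n) holomorphic_on {z. Re z > Re s0}"
  proof (rule holomorphic_uniform_sequence[where f = "\<lambda>N z. \<Sum>n<N. T z n"])
    show "(\<lambda>z. \<Sum>n<N. T z n) holomorphic_on {z. Re z > Re s0}" for N
      unfolding T_def by (intro holomorphic_intros)
    fix z0 assume "z0 \<in> {z. Re z > Re s0}"
    define d where "d = (Re z0 - Re s0) / 2"
    have "d > 0" using \<open>z0 \<in> _\<close> by (simp add: d_def)
    have Re_ge: "Re (z - s0) \<ge> d" and norm_le: "norm (z - s0) \<le> norm (z0 - s0) + d"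
      if "z \<in> cball z0 d" for z
      using mem_cball_diff_bounds[OF that, of s0] by (auto simp: d_def field_simps)
    have "uniform_limit (cball z0 d) (\<lambda>N z. \<Sum>n<N. T z n) (\<lambda>z. \<Sum>n. T z n) sequentially"
    proof (rule Weierstrass_m_test)
      show "summable (\<lambda>n. M * ((norm (z0 - s0) + d) * real (Suc n) powr (- d - 1)))"
        using summable_Suc_powr[OF \<open>d > 0\<close>] by (intro summable_mult)
      fix n z assume z: "z \<in> cball z0 d"
      then have "Re z > Re s0" using Re_ge[OF z] \<open>d > 0\<close> by simp
      then have "norm (T z n) \<le> M * (norm (z - s0) * real (Suc n) powr (- Re (z - s0) - 1))"
        unfolding T_def by (rule norm_powr_diff_series_term_le[OF r])
      also have "\<dots> \<le> M * ((norm (z0 - s0) + d) * real (Suc n) powr (- d - 1))"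
        using order_trans[OF norm_ge_zero r] Re_ge[OF z] norm_le[OF z] \<open>d > 0\<close>
        by (intro mult_left_mono mult_mono powr_mono) auto
      finally show "norm (T z n) \<le> M * ((norm (z0 - s0) + d) * real (Suc n) powr (- d - 1))" .
    qed
    moreover have "cball z0 d \<subseteq> {z. Re z > Re s0}"
      using Re_ge \<open>d > 0\<close> by force
    ultimately show "\<exists>d>0. cball z0 d \<subseteq> {z. Re z > Re s0} \<and>
        uniform_limit (cball z0 d) (\<lambda>N z. \<Sum>n<N. T z n) (\<lambda>z. \<Sum>n. T z n) sequentially"
      using \<open>d > 0\<close> by blast
  qed (simp add: open_halfspace_Re_gt)
qed

text \<open>Partial summation against the tails \<open>R\<close> of the series at \<open>s0\<close>: the resulting
  series converges absolutely for \<open>Re z > Re s0\<close>, because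
  \<open>(n + 2) powr (s0 - z) - (n + 1) powr (s0 - z) = O(n powr (Re (s0 - z) - 1))\<close>.\<close>
lemma dirichlet_series_sums_by_parts:
  fixes c :: "nat \<Rightarrow> complex" and s0 z :: complex
  defines "R \<equiv> \<lambda>n. \<Sum>m. c (m + n) / of_nat (Suc (m + n)) powr s0"
  assumes summable: "summable (\<lambda>n. c n / of_nat (Suc n) powr s0)" and "Re z > Re s0"
  shows "(\<lambda>n. c n / of_nat (Suc n) powr z) sums
    (R 0 + (\<Sum>n. R (Suc n) * (of_nat (Suc (Suc n)) powr (s0 - z) - of_nat (Suc n) powr (s0 - z))))"
proof -
  define v where "v n = (of_nat (Suc n) :: complex) powr (s0 - z)" for n
  have "norm (v n) \<le> 1" for n
    using \<open>Re z > Re s0\<close> powr_mono[of "Re s0 - Re z" 0 "real (Suc n)"]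
    by (simp add: v_def norm_powr_real_powr del: of_nat_Suc)
  then have "Bseq v"
    by (rule BseqI')
  have "Bseq R"
    unfolding R_def using summable by (rule Bseq_suminf_tails)
  then obtain M where "\<And>n. norm (R (Suc n)) \<le> M"
    by (metis BseqE)
  then have "summable (\<lambda>n. R (Suc n) * (v (Suc n) - v n))"
    unfolding v_def by (rule summable_powr_diff_series) fact
  from sums_mult_by_parts[OF summable \<open>Bseq v\<close>] this
  have "(\<lambda>n. c n / of_nat (Suc n) powr s0 * v n) sums
      (R 0 * v 0 + (\<Sum>n. R (Suc n) * (v (Suc n) - v n)))"
    by (simp add: R_def add.commute[of _ "Suc _"])
  moreover have "c n / of_nat (Suc n) powr s0 * v n = c n / of_nat (Suc n) powr z" for n
    by (simp add: v_def powr_diff del: of_nat_Suc)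
  ultimately show ?thesis
    by (simp add: v_def)
qed

lemma dirichlet_series_holomorphic:
  fixes c :: "nat \<Rightarrow> complex" and s0 :: complex
  assumes summable: "summable (\<lambda>n. c n / of_nat (Suc n) powr s0)"
  shows "(\<lambda>z. \<Sum>n. c n / of_nat (Suc n) powr z) holomorphic_on {z. Re z > Re s0}"
proof -
  define R where "R n = (\<Sum>m. c (m + n) / of_nat (Suc (m + n)) powr s0)" for n
  have "Bseq R"
    unfolding R_def using summable by (rule Bseq_suminf_tails)
  then obtain M where "\<And>n. norm (R (Suc n)) \<le> M"
    by (metis BseqE)
  then have "(\<lambda>z. R 0 + (\<Sum>n. R (Suc n) * (of_nat (Suc (Suc n)) powr (s0 - z) - of_nat (Suc n) powr (s0 - z))))
      holomorphic_on {z. Re z > Re s0}"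
    by (intro holomorphic_intros holomorphic_powr_diff_series)
  then show ?thesis
    by (rule holomorphic_transform)
      (use dirichlet_series_sums_by_parts[OF summable] sums_unique in \<open>auto simp: R_def\<close>)
qed

lemma zeta_holomorphic:
  assumes "\<rho> > 1"
  shows "zeta holomorphic_on {z. Re z > \<rho>}"
proof -
  have "summable (\<lambda>n. real n powr (- \<rho>))"
    using assms by (simp add: summable_real_powr_iff)
  then have "summable (\<lambda>n. real (Suc n) powr (- \<rho>))"
    by (subst summable_Suc_iff)
  moreover have "norm (1 / of_nat (Suc n) powr (of_real \<rho> :: complex)) = real (Suc n) powr (- \<rho>)" for n
    by (simp add: norm_divide norm_inverse norm_powr_real_powr powr_minus divide_inverse
        del: of_nat_Suc)
  ultimately have "summable (\<lambda>n. norm (1 / of_nat (Suc n) powr (of_real \<rho> :: complex)))"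
    by simp
  then have "(\<lambda>z. \<Sum>n. 1 / of_nat (Suc n) powr z) holomorphic_on {z. Re z > Re (of_real \<rho>)}"
    by (rule dirichlet_series_holomorphic[OF summable_norm_cancel])
  then show ?thesis
    unfolding zeta_def by simp
qed

lemma holomorphic_on_halfplane_eq_0:
  assumes "f holomorphic_on {z. Re z > \<rho>}" and "\<And>z. Re z \<ge> \<sigma> \<Longrightarrow> f z = 0" and "Re s > \<rho>"
  shows "f s = 0"
proof (rule analytic_continuation_open[where s = "{z. Re z > max \<sigma> \<rho>}" and s' = "{z. Re z > \<rho>}"
      and f = f and g = "\<lambda>_. 0"])
  have "of_real (max \<sigma> \<rho> + 1) \<in> {z. Re z > max \<sigma> \<rho>}"
    by auto
  then show "{z. Re z > max \<sigma> \<rho>} \<noteq> {}"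
    by blast
  show "connected {z. Re z > \<rho>}"
    by (rule convex_connected) (rule convex_halfspace_Re_gt)
  show "open {z. Re z > max \<sigma> \<rho>}" and "open {z. Re z > \<rho>}"
    by (simp_all only: open_halfspace_Re_gt)
qed (use assms in auto)

section \<open>The generating function of the weights\<close>

declare b.simps [simp del]

lemma b_0 [simp]: "b 0 = 1" and b_1 [simp]: "b (Suc 0) = 1"
  by (simp_all add: b.simps)

lemma b_rec: "n \<ge> 2 \<Longrightarrow> b n = - (\<Sum>i\<in>{1..<n}. b i * b (n - i))"
  by (subst b.simps) simp

definition binom_weight :: "nat \<Rightarrow> int" where
  "binom_weight l = (\<Sum>k=2..l div 2. b k * int ((l - k - 2) choose (k - 2)))"

text \<open>The series defining \<open>a\<close> runs over \<open>l = k + 1\<close> with inner sum \<open>binom_weight l\<close>, so that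
  \<open>a n = (\<Sum>k. length_weight k * alpha k n)\<close>.\<close>
definition length_weight :: "nat \<Rightarrow> int" where
  "length_weight k = (if k = 1 then 1 else 0) + (-1) ^ (k + 1) * binom_weight (k + 1)"

definition b_fps :: "complex fps" where
  "b_fps = Abs_fps (\<lambda>n. of_int (b (Suc n)))"

definition weight_fps :: "complex fps" where
  "weight_fps = Abs_fps (\<lambda>k. of_int (length_weight k))"

lemma b_fps_quadratic: "b_fps + fps_X * b_fps^2 = 1"
proof (rule fps_ext)
  fix n
  show "(b_fps + fps_X * b_fps^2) $ n = 1 $ n"
  proof (cases n)
    case (Suc m)
    have "(b_fps^2) $ m = (\<Sum>i=0..m. of_int (b (Suc i) * b (Suc (Suc m) - Suc i)))"
      by (simp add: power2_eq_square fps_mult_nth b_fps_def Suc_diff_le)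
    also have "\<dots> = (\<Sum>i\<in>{1..<Suc (Suc m)}. of_int (b i * b (Suc (Suc m) - i)))"
      by (simp only: One_nat_def sum.shift_bounds_Suc_ivl atLeastLessThanSuc_atLeastAtMost
          sum.shift_bounds_cl_Suc_ivl)
    also have "\<dots> = - of_int (b (Suc (Suc m)))"
      by (subst b_rec[of "Suc (Suc m)"]) simp_all
    finally show ?thesis using Suc by (simp add: b_fps_def)
  qed (simp add: b_fps_def)
qed

lemma fps_X2_div_1_plus_X_power_nth:
  assumes "i \<ge> 1"
  shows "((fps_X^2 * fps_binomial (-1))^i) $ m =
    (if 2 * i \<le> m then (-1)^m * of_nat ((m - i - 1) choose (i - 1)) else 0 :: complex)"
proof -
  have "(fps_X^2 * fps_binomial (-1))^i = fps_X^(2 * i) * fps_binomial (- of_nat i :: complex)"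
    by (simp add: power_mult_distrib power_mult fps_binomial_power)
  moreover have "(- of_nat i gchoose (m - 2 * i)) = (-1)^m * (of_nat ((m - i - 1) choose (i - 1)) :: complex)"
    if "2 * i \<le> m"
  proof -
    define p where "p = m - 2 * i"
    have "(- of_nat i gchoose p) = (-1)^p * (of_nat (i + p - 1) gchoose p :: complex)"
      using assms by (simp add: gbinomial_minus of_nat_diff)
    also have "(of_nat (i + p - 1) gchoose p :: complex) = of_nat ((i + p - 1) choose p)"
      by (simp add: binomial_gbinomial)
    also have "(i + p - 1) choose p = (m - i - 1) choose (i - 1)"
      using assms that by (subst binomial_symmetric) (auto simp: p_def)
    also have "(-1 :: complex)^p = (-1)^m"
      using that by (simp add: p_def power_diff_conv_inverse)
    finally show ?thesis by (simp add: p_def)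
  qed
  ultimately show ?thesis
    by (simp add: fps_X_power_mult_nth)
qed

lemma b_fps_compose_nth:
  "(b_fps oo (fps_X^2 * fps_binomial (-1))) $ m =
    (if m = 0 then 1 else 0) + (-1)^m * of_int (binom_weight (m + 2))"
proof -
  define f where "f i = b_fps $ i * ((fps_X^2 * fps_binomial (-1))^i $ m)" for i
  have "(b_fps oo (fps_X^2 * fps_binomial (-1))) $ m = f 0 + (\<Sum>i=1..m. f i)"
    by (simp add: fps_compose_nth f_def sum.atLeast_Suc_atMost)
  also have "f 0 = (if m = 0 then 1 else 0)"
    by (simp add: f_def b_fps_def)
  also have "(\<Sum>i=1..m. f i) = (\<Sum>i=1..m div 2. f i)"
    by (rule sum.mono_neutral_right) (auto simp: f_def fps_X2_div_1_plus_X_power_nth)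
  also have "\<dots> = (\<Sum>k=2..(m + 2) div 2. f (k - 1))"
  proof -
    have "(m + 2) div 2 = Suc (m div 2)" by simp
    then show ?thesis by (simp only: sum.shift_bounds_cl_Suc_ivl numeral_2_eq_2) simp
  qed
  also have "\<dots> = (-1)^m * of_int (binom_weight (m + 2))"
    unfolding binom_weight_def of_int_sum sum_distrib_left
  proof (intro sum.cong refl)
    fix k assume "k \<in> {2..(m + 2) div 2}"
    then have "2 * (k - 1) \<le> m" "m - (k - 1) - 1 = m + 2 - k - 2" "k - 1 - 1 = k - 2" "k - 1 \<ge> 1"
      by auto
    then show "f (k - 1) = (-1)^m * of_int (b k * int ((m + 2 - k - 2) choose (k - 2)))"
      by (simp add: f_def b_fps_def fps_X2_div_1_plus_X_power_nth)
  qed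
  finally show ?thesis .
qed

lemma weight_fps_eq: "weight_fps = fps_X * (b_fps oo (fps_X^2 * fps_binomial (-1)))"
proof (rule fps_ext)
  fix k
  show "weight_fps $ k = (fps_X * (b_fps oo (fps_X^2 * fps_binomial (-1)))) $ k"
    by (cases k) (simp_all add: weight_fps_def length_weight_def binom_weight_def b_fps_compose_nth)
qed

text \<open>With \<open>W = b_fps oo Y\<close> for \<open>Y = X\<^sup>2/(1 + X)\<close>, we have \<open>weight_fps = X W\<close> and
  \<open>W + Y W\<^sup>2 = 1\<close>; multiplying the latter by \<open>X (1 + X)\<close> gives the claim.\<close>
lemma weight_fps_quadratic:
  "fps_X * weight_fps^2 + (1 + fps_X) * weight_fps - fps_X * (1 + fps_X) = 0"
proof -
  define Y :: "complex fps" where "Y = fps_X^2 * fps_binomial (-1)"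
  define W where "W = b_fps oo Y"
  have "Y $ 0 = 0" by (simp add: Y_def)
  then have "W + Y * W^2 = 1"
    using arg_cong[OF b_fps_quadratic, of "\<lambda>f. f oo Y"]
    by (simp add: W_def fps_compose_add_distrib fps_compose_mult_distrib power2_eq_square)
  moreover have "Y * (1 + fps_X) = fps_X^2"
    by (simp add: Y_def fps_binomial_minus_one mult.assoc inverse_mult_eq_1)
  ultimately show ?thesis
    unfolding weight_fps_eq W_def[symmetric] Y_def[symmetric]
    by algebra
qed

section \<open>Growth of the weights\<close>

lemma convolution_partial_sums_le:
  fixes x :: "nat \<Rightarrow> real"
  assumes nonneg: "\<And>n. x n \<ge> 0" and "x 1 \<le> 1/4"
    and conv: "\<And>n. n \<ge> 2 \<Longrightarrow> x n \<le> (\<Sum>i\<in>{1..<n}. x i * x (n - i))"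
  shows "(\<Sum>n=1..N. x n) \<le> 1/2"
proof (induction N)
  case (Suc M)
  define S where "S = (\<Sum>n=1..M. x n)"
  have "(\<Sum>n=2..Suc M. x n) \<le> (\<Sum>n=2..Suc M. \<Sum>i\<in>{i\<in>{1..M}. i < n}. x i * x (n - i))"
  proof (intro sum_mono)
    fix n assume "n \<in> {2..Suc M}"
    moreover from this have "{i\<in>{1..M}. i < n} = {1..<n}" by auto
    ultimately show "x n \<le> (\<Sum>i\<in>{i\<in>{1..M}. i < n}. x i * x (n - i))"
      using conv by simp
  qed
  also have "\<dots> = (\<Sum>i=1..M. \<Sum>n\<in>{n\<in>{2..Suc M}. i < n}. x i * x (n - i))"
    by (rule sum.swap_restrict) auto
  also have "\<dots> \<le> (\<Sum>i=1..M. x i * S)"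
  proof (intro sum_mono)
    fix i assume i: "i \<in> {1..M}"
    have "{n\<in>{2..Suc M}. i < n} = {1 + i..(Suc M - i) + i}" using i by auto
    then have "(\<Sum>n\<in>{n\<in>{2..Suc M}. i < n}. x i * x (n - i)) = x i * (\<Sum>j=1..Suc M - i. x j)"
      by (simp only: sum.shift_bounds_cl_nat_ivl) (simp add: sum_distrib_left)
    also have "\<dots> \<le> x i * S"
      unfolding S_def using i by (intro mult_left_mono sum_mono2 nonneg) auto
    finally show "(\<Sum>n\<in>{n\<in>{2..Suc M}. i < n}. x i * x (n - i)) \<le> x i * S" .
  qed
  also have "\<dots> = S * S" by (simp add: S_def sum_distrib_right)
  also have "\<dots> \<le> 1/2 * (1/2)"
    using Suc.IH sum_nonneg[OF nonneg] by (intro mult_mono) (simp_all add: S_def)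
  finally have "(\<Sum>n=2..Suc M. x n) \<le> 1/4" by simp
  moreover have "(\<Sum>n=1..Suc M. x n) = x 1 + (\<Sum>n=2..Suc M. x n)"
    by (simp add: sum.atLeast_Suc_atMost numeral_2_eq_2)
  ultimately show ?case using \<open>x 1 \<le> 1/4\<close> by simp
qed simp

lemma abs_b_le: "\<bar>b n\<bar> \<le> 4^n"
proof (cases "n = 0")
  case False
  define x where "x n = real_of_int \<bar>b n\<bar> / 4^n" for n
  have "x n \<le> (\<Sum>i\<in>{1..<n}. x i * x (n - i))" if "n \<ge> 2" for n
  proof -
    have "\<bar>b n\<bar> \<le> (\<Sum>i\<in>{1..<n}. \<bar>b i\<bar> * \<bar>b (n - i)\<bar>)"
      using b_rec[OF that] by (simp add: abs_mult[symmetric] sum_abs)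
    then have "x n \<le> real_of_int (\<Sum>i\<in>{1..<n}. \<bar>b i\<bar> * \<bar>b (n - i)\<bar>) / 4^n"
      unfolding x_def by (intro divide_right_mono) (simp only: of_int_le_iff, simp)
    also have "\<dots> = (\<Sum>i\<in>{1..<n}. x i * x (n - i))"
      unfolding of_int_sum sum_divide_distrib
      by (intro sum.cong refl) (simp add: x_def flip: power_add)
    finally show ?thesis .
  qed
  then have "(\<Sum>k=1..n. x k) \<le> 1/2"
    by (intro convolution_partial_sums_le) (simp_all add: x_def)
  moreover have "x n \<le> (\<Sum>k=1..n. x k)"
    using False by (intro member_le_sum) (auto simp: x_def)
  ultimately have "x n \<le> 1"
    by linarith
  then have "real_of_int \<bar>b n\<bar> \<le> 4^n"
    by (simp add: x_def divide_le_eq)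
  then show ?thesis
    by (metis of_int_abs of_int_le_iff of_int_numeral of_int_power)
qed simp

lemma abs_binom_weight_le: "\<bar>binom_weight l\<bar> \<le> 16^l"
proof -
  have "\<bar>binom_weight l\<bar> \<le> (\<Sum>k=2..l div 2. \<bar>b k * int ((l - k - 2) choose (k - 2))\<bar>)"
    unfolding binom_weight_def by (rule sum_abs)
  also have "\<dots> \<le> (\<Sum>k=2..l div 2. 4^l * 2^l)"
  proof (intro sum_mono)
    fix k assume "k \<in> {2..l div 2}"
    then have "\<bar>b k\<bar> \<le> 4^l"
      using abs_b_le[of k] by (meson order_trans atLeastAtMost_iff div_le_dividend
          one_le_numeral power_increasing)
    moreover have "(l - k - 2) choose (k - 2) \<le> 2^l"
      using binomial_le_pow2[of "l - k - 2" "k - 2"] power_increasing[of "l - k - 2" l "2::nat"]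
      by linarith
    then have "int ((l - k - 2) choose (k - 2)) \<le> 2^l"
      by (metis of_nat_le_iff of_nat_numeral of_nat_power)
    ultimately show "\<bar>b k * int ((l - k - 2) choose (k - 2))\<bar> \<le> 4^l * 2^l"
      by (simp add: abs_mult mult_mono)
  qed
  also have "\<dots> = int (card {2..l div 2}) * (4^l * 2^l)"
    by simp
  also have "\<dots> \<le> 2^l * (4^l * 2^l)"
  proof (rule mult_right_mono)
    have "card {2..l div 2} \<le> l" by simp
    also have "l \<le> 2^l" using less_exp[of l] by simp
    finally have "card {2..l div 2} \<le> 2^l" .
    then show "int (card {2..l div 2}) \<le> 2^l"
      by (metis of_nat_le_iff of_nat_numeral of_nat_power)
  qed simp
  also have "\<dots> = 16^l"
    by (simp flip: power_mult_distrib)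
  finally show ?thesis .
qed

lemma abs_length_weight_le: "\<bar>length_weight k\<bar> \<le> 32 * 16^k"
proof -
  have "\<bar>length_weight k\<bar> \<le> 1 + \<bar>binom_weight (k + 1)\<bar>"
    by (auto simp: length_weight_def abs_mult)
  moreover have "(1::int) \<le> 16^k" and "(16::int)^(k + 1) = 16 * 16^k"
    by simp_all
  ultimately show ?thesis
    using abs_binom_weight_le[of "k + 1"] by linarith
qed

lemma weight_fps_conv_radius: "fps_conv_radius weight_fps \<ge> ereal (1/32)"
  unfolding fps_conv_radius_def
proof (rule conv_radius_geI_ex')
  fix r :: real assume "0 < r" "ereal r < ereal (1/32)"
  then have r: "0 < r" "r < 1/32"
    by simp_all
  show "summable (\<lambda>n. weight_fps $ n * of_real r ^ n)"
  proof (rule summable_norm_cancel, rule summable_comparison_test'[where N = 0])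
    show "summable (\<lambda>n. 32 * (16 * r)^n)"
      using r by (intro summable_mult summable_geometric) auto
    fix n :: nat
    have "real_of_int \<bar>length_weight n\<bar> \<le> real_of_int (32 * 16^n)"
      using abs_length_weight_le[of n] by (simp only: of_int_le_iff)
    then have "\<bar>real_of_int (length_weight n)\<bar> * r^n \<le> 32 * 16^n * r^n"
      using r by (intro mult_right_mono) simp_all
    also have "\<dots> = 32 * (16 * r)^n"
      by (simp add: power_mult_distrib)
    finally show "norm (norm (weight_fps $ n * of_real r ^ n)) \<le> 32 * (16 * r)^n"
      using r by (simp add: weight_fps_def norm_mult norm_power)
  qed
qed

lemma eval_weight_fps_quadratic:
  assumes "ereal (norm z) < fps_conv_radius weight_fps"
  shows "z * eval_fps weight_fps z ^ 2 + (1 + z) * eval_fps weight_fps z - z * (1 + z) = 0"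
proof -
  have radius_mult: "ereal (norm z) < fps_conv_radius (f * g)"
    if "ereal (norm z) < fps_conv_radius f" "ereal (norm z) < fps_conv_radius g" for f g :: "complex fps"
    using that fps_conv_radius_mult[of f g] by (metis min_less_iff_conj less_le_trans)
  have radius_add: "ereal (norm z) < fps_conv_radius (f + g)"
    if "ereal (norm z) < fps_conv_radius f" "ereal (norm z) < fps_conv_radius g" for f g :: "complex fps"
    using that fps_conv_radius_add[of f g] by (metis min_less_iff_conj less_le_trans)
  have radius_power: "ereal (norm z) < fps_conv_radius (f ^ n)"
    if "ereal (norm z) < fps_conv_radius f" for f :: "complex fps" and n
    using that fps_conv_radius_power[of f n] by (rule less_le_trans)
  have "eval_fps (fps_X * weight_fps^2 + (1 + fps_X) * weight_fps - fps_X * (1 + fps_X)) z = 0"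
    by (simp add: weight_fps_quadratic)
  then show ?thesis
    using assms
    by (simp add: eval_fps_diff eval_fps_add eval_fps_mult eval_fps_power
        radius_mult radius_add radius_power)
qed

section \<open>Ordered factorisations\<close>

definition factorisations :: "nat \<Rightarrow> int list set" where
  "factorisations n = {xs \<in> lists {2..}. prod_list xs = int n}"

lemma two_power_length_le_prod_list:
  "set xs \<subseteq> {2..} \<Longrightarrow> 2 ^ length xs \<le> prod_list (xs :: int list)"
  by (induction xs) (auto intro: mult_mono)

lemma member_le_prod_list:
  assumes "set xs \<subseteq> {2..}" and "y \<in> set xs"
  shows "y \<le> prod_list (xs :: int list)"
proof -
  have "(1::int) \<le> 2 ^ length (remove1 y xs)"
    by simp
  also have "\<dots> \<le> prod_list (remove1 y xs)"
    using assms(1) set_remove1_subset[of y xs] by (intro two_power_length_le_prod_list) blast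
  finally have "1 \<le> prod_list (remove1 y xs)" .
  moreover have "prod_list xs = y * prod_list (remove1 y xs)"
    using assms(2) by (induction xs) auto
  moreover have "y \<ge> 2" using assms by auto
  ultimately show ?thesis
    by (simp add: mult_le_cancel_left1)
qed

lemma length_less_prod_list:
  assumes "set xs \<subseteq> {2..}" and "prod_list xs = int n"
  shows "length xs < n"
proof -
  have "int (length xs) < 2 ^ length xs"
    by (rule of_nat_less_two_power)
  also have "\<dots> \<le> int n"
    using two_power_length_le_prod_list[OF assms(1)] assms(2) by simp
  finally show ?thesis by simp
qed

lemma finite_factorisations: "finite (factorisations n)"
proof (rule finite_subset)
  show "factorisations n \<subseteq> {xs. set xs \<subseteq> {2..int n} \<and> length xs \<le> n}"
  proof
    fix xs assume "xs \<in> factorisations n"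
    then have "set xs \<subseteq> {2..}" "prod_list xs = int n"
      by (auto simp: factorisations_def in_lists_conv_set)
    then show "xs \<in> {xs. set xs \<subseteq> {2..int n} \<and> length xs \<le> n}"
      using member_le_prod_list length_less_prod_list by fastforce
  qed
qed (simp add: finite_lists_length_le)

lemma alpha_eq_card: "alpha k n = card {xs \<in> factorisations n. length xs = k}"
  unfolding alpha_def factorisations_def in_lists_conv_set
  by (intro arg_cong[where f = card]) auto

lemma alpha_eq_0:
  assumes "n \<le> k"
  shows "alpha k n = 0"
proof -
  have "{xs \<in> factorisations n. length xs = k} = {}"
    using length_less_prod_list assms by (fastforce simp: factorisations_def in_lists_conv_set)
  then show ?thesis
    by (simp only: alpha_eq_card card.empty)
qed

lemma binom_weight_eq_0: "l \<le> 3 \<Longrightarrow> binom_weight l = 0"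
  unfolding binom_weight_def by (intro sum.neutral) auto

lemma a_eq_sum_length_weight:
  assumes "n \<ge> 1"
  shows "a n = (\<Sum>k\<le>n. length_weight k * int (alpha k n))"
proof -
  have "(\<Sum>k\<le>n. length_weight k * int (alpha k n)) =
      (\<Sum>k\<le>n. (if k = 1 then 1 else 0) * int (alpha k n)) +
      (\<Sum>k\<le>n. (-1)^(k + 1) * binom_weight (k + 1) * int (alpha k n))"
    by (simp only: length_weight_def distrib_right sum.distrib)
  also have "(\<Sum>k\<le>n. (if k = 1 then 1 else 0) * int (alpha k n)) = (\<Sum>k\<in>{1}. int (alpha k n))"
    using assms by (intro sum.mono_neutral_cong_right) auto
  also have "(\<Sum>k\<le>n. (-1)^(k + 1) * binom_weight (k + 1) * int (alpha k n)) =
      (\<Sum>k=3..n. (-1)^(k + 1) * binom_weight (k + 1) * int (alpha k n))"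
    by (rule sum.mono_neutral_right) (auto simp: binom_weight_eq_0)
  also have "\<dots> = (\<Sum>l=Suc 3..Suc n. (-1)^l * int (alpha (l - 1) n) * binom_weight l)"
    by (simp only: sum.shift_bounds_cl_Suc_ivl) (simp add: mult_ac)
  also have "(\<Sum>k\<in>{1}. int (alpha k n)) + \<dots> = a n"
    unfolding a_def binom_weight_def[symmetric]
    by (subst infsum_cong_neutral[where T = "{4..n + 1}"]) (auto simp: alpha_eq_0)
  finally show ?thesis
    by (rule sym)
qed

lemma a_eq_sum_factorisations:
  assumes "n \<ge> 1"
  shows "a n = (\<Sum>xs\<in>factorisations n. length_weight (length xs))"
proof -
  have "length ` factorisations n \<subseteq> {..n}"
    using length_less_prod_list by (fastforce simp: factorisations_def in_lists_conv_set)
  then have "(\<Sum>xs\<in>factorisations n. length_weight (length xs)) =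
      (\<Sum>k\<le>n. \<Sum>xs\<in>{xs \<in> factorisations n. length xs = k}. length_weight (length xs))"
    by (intro sum.group[symmetric] finite_factorisations) auto
  also have "\<dots> = (\<Sum>k\<le>n. length_weight k * int (alpha k n))"
  proof (intro sum.cong refl)
    fix k
    have "(\<Sum>xs\<in>{xs \<in> factorisations n. length xs = k}. length_weight (length xs)) =
        (\<Sum>xs\<in>{xs \<in> factorisations n. length xs = k}. length_weight k)"
      by (rule sum.cong) auto
    then show "(\<Sum>xs\<in>{xs \<in> factorisations n. length xs = k}. length_weight (length xs)) =
        length_weight k * int (alpha k n)"
      by (simp add: alpha_eq_card ac_simps)
  qed
  finally show ?thesis
    using a_eq_sum_length_weight[OF assms] by simp
qed

section \<open>Sums over lists\<close>

lemma has_sum_mult_Times: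
  fixes f g :: "_ \<Rightarrow> 'a::{banach, real_normed_field}"
  assumes f: "(f has_sum F) A" and g: "(g has_sum G) B"
    and nf: "(\<lambda>x. norm (f x)) summable_on A" and ng: "(\<lambda>y. norm (g y)) summable_on B"
  shows "((\<lambda>(x, y). f x * g y) has_sum F * G) (A \<times> B)"
proof (rule has_sum_SigmaI[where g = "\<lambda>x. f x * G"])
  show "((\<lambda>y. case (x, y) of (x, y) \<Rightarrow> f x * g y) has_sum f x * G) B" for x
    using has_sum_cmult_right[OF g, of "f x"] by simp
  show "((\<lambda>x. f x * G) has_sum F * G) A"
    by (rule has_sum_cmult_left[OF f])
  have "(\<lambda>(x, y). norm (f x) * norm (g y)) summable_on A \<times> B"
  proof (rule summable_on_SigmaI)
    show "((\<lambda>y. case (x, y) of (x, y) \<Rightarrow> norm (f x) * norm (g y)) has_sum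
        norm (f x) * infsum (\<lambda>y. norm (g y)) B) B" for x
      using has_sum_cmult_right[OF has_sum_infsum[OF ng], of "norm (f x)"] by simp
    show "(\<lambda>x. norm (f x) * infsum (\<lambda>y. norm (g y)) B) summable_on A"
      by (rule summable_on_cmult_left[OF nf])
  qed auto
  then have "(\<lambda>p. norm ((\<lambda>(x, y). f x * g y) p)) summable_on A \<times> B"
    by (simp add: case_prod_unfold norm_mult)
  then show "(\<lambda>(x, y). f x * g y) summable_on A \<times> B"
    by (rule abs_summable_summable)
qed

lemma bij_betw_Cons_lists:
  "bij_betw (\<lambda>(x, xs). x # xs) (A \<times> {xs \<in> lists A. length xs = k}) {xs \<in> lists A. length xs = Suc k}"
  by (rule bij_betw_byWitness[where f' = "\<lambda>xs. (hd xs, tl xs)"]) (auto simp: length_Suc_conv)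

lemma has_sum_prod_list:
  fixes g :: "'b \<Rightarrow> 'a::{banach, real_normed_field}"
  assumes g: "(g has_sum G) A" and ng: "((\<lambda>x. norm (g x)) has_sum N) A"
  shows "((\<lambda>xs. prod_list (map g xs)) has_sum G ^ k) {xs \<in> lists A. length xs = k} \<and>
    ((\<lambda>xs. norm (prod_list (map g xs))) has_sum N ^ k) {xs \<in> lists A. length xs = k}"
proof (induction k)
  case 0
  have "{xs \<in> lists A. length xs = 0} = {[]}" by auto
  then show ?case
    using has_sum_finite[of "{[]}" "\<lambda>xs. prod_list (map g xs)"]
      has_sum_finite[of "{[]}" "\<lambda>xs. norm (prod_list (map g xs))"]
    by (simp only:) simp
next
  case (Suc k)
  note summable = has_sum_imp_summable[OF ng] has_sum_imp_summable[OF conjunct2[OF Suc.IH]]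
  have "((\<lambda>(x, xs). g x * prod_list (map g xs)) has_sum G * G ^ k)
      (A \<times> {xs \<in> lists A. length xs = k})"
    using summable by (intro has_sum_mult_Times[OF g conjunct1[OF Suc.IH]]) simp_all
  moreover have "((\<lambda>(x, xs). norm (g x) * norm (prod_list (map g xs))) has_sum N * N ^ k)
      (A \<times> {xs \<in> lists A. length xs = k})"
    using summable by (intro has_sum_mult_Times[OF ng conjunct2[OF Suc.IH]]) simp_all
  ultimately show ?case
    using has_sum_reindex_bij_betw[OF bij_betw_Cons_lists, of "\<lambda>xs. prod_list (map g xs)"]
      has_sum_reindex_bij_betw[OF bij_betw_Cons_lists, of "\<lambda>xs. norm (prod_list (map g xs))"]
    by (simp add: case_prod_unfold norm_mult)
qed

lemma has_sum_fps_nth_length_prod_list_length_eq: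
  fixes g :: "'b \<Rightarrow> complex" and F :: "complex fps"
  assumes g: "(g has_sum G) A" and ng: "((\<lambda>x. norm (g x)) has_sum N) A"
  shows "((\<lambda>xs. F $ length xs * prod_list (map g xs)) has_sum F $ k * G ^ k)
      {xs \<in> lists A. length xs = k}"
    and "((\<lambda>xs. norm (F $ length xs * prod_list (map g xs))) has_sum norm (F $ k) * N ^ k)
      {xs \<in> lists A. length xs = k}"
proof -
  have "((\<lambda>xs. F $ k * prod_list (map g xs)) has_sum F $ k * G ^ k) {xs \<in> lists A. length xs = k}"
    by (rule has_sum_cmult_right) (rule conjunct1[OF has_sum_prod_list[OF g ng]])
  then show "((\<lambda>xs. F $ length xs * prod_list (map g xs)) has_sum F $ k * G ^ k)
      {xs \<in> lists A. length xs = k}"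
    by (subst has_sum_cong[where g = "\<lambda>xs. F $ k * prod_list (map g xs)"]) auto
  have "((\<lambda>xs. norm (F $ k) * norm (prod_list (map g xs))) has_sum norm (F $ k) * N ^ k)
      {xs \<in> lists A. length xs = k}"
    by (rule has_sum_cmult_right) (rule conjunct2[OF has_sum_prod_list[OF g ng]])
  then show "((\<lambda>xs. norm (F $ length xs * prod_list (map g xs))) has_sum norm (F $ k) * N ^ k)
      {xs \<in> lists A. length xs = k}"
    by (subst has_sum_cong[where g = "\<lambda>xs. norm (F $ k) * norm (prod_list (map g xs))"])
      (auto simp: norm_mult)
qed

lemma has_sum_fps_nth_length_prod_list:
  fixes g :: "'b \<Rightarrow> complex" and F :: "complex fps"
  assumes g: "(g has_sum G) A" and ng: "((\<lambda>x. norm (g x)) has_sum N) A"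
    and radius: "ereal N < fps_conv_radius F"
  shows "((\<lambda>xs. F $ length xs * prod_list (map g xs)) has_sum eval_fps F G) (lists A)"
proof -
  define L where "L k = {xs \<in> lists A. length xs = k}" for k
  define f where "f xs = F $ length xs * prod_list (map g xs)" for xs
  note inner = has_sum_fps_nth_length_prod_list_length_eq[OF g ng, of F, folded f_def L_def]
  have "N \<ge> 0"
    using ng by (rule has_sum_nonneg) simp
  have bij: "bij_betw (\<lambda>xs. (length xs, xs)) (lists A) (Sigma UNIV L)"
    by (rule bij_betw_byWitness[where f' = snd]) (auto simp: L_def)
  have "summable (\<lambda>k. norm (F $ k * of_real N ^ k))"
    using radius \<open>N \<ge> 0\<close> by (intro norm_summable_fps) simp
  then have "(\<lambda>k. norm (F $ k) * N ^ k) summable_on UNIV"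
    using \<open>N \<ge> 0\<close> by (intro summable_nonneg_imp_summable_on) (simp_all add: norm_mult norm_power)
  then have "(\<lambda>(k, xs). norm (f xs)) summable_on Sigma UNIV L"
    using inner(2) by (intro summable_on_SigmaI) auto
  then have "(\<lambda>xs. norm (f xs)) summable_on lists A"
    using summable_on_reindex_bij_betw[OF bij, of "\<lambda>(k, xs). norm (f xs)"] by simp
  then have "f summable_on lists A"
    by (rule abs_summable_summable)
  then obtain S where S: "(f has_sum S) (lists A)"
    by (auto simp: summable_on_def)
  then have "((\<lambda>(k, xs). f xs) has_sum S) (Sigma UNIV L)"
    using has_sum_reindex_bij_betw[OF bij, of "\<lambda>(k, xs). f xs"] by simp
  then have "((\<lambda>k. F $ k * G ^ k) has_sum S) UNIV"
    using inner(1) by (intro has_sum_Sigma'[where B = L]) auto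
  then have "S = eval_fps F G"
    unfolding eval_fps_def by (intro sums_unique has_sum_imp_sums)
  then show ?thesis
    using S by (simp add: f_def[abs_def])
qed

lemma has_sum_lists_imp_sums_factorisations:
  fixes f :: "int list \<Rightarrow> complex"
  assumes "(f has_sum S) (lists {2..})"
  shows "(\<lambda>n. \<Sum>xs\<in>factorisations (Suc n). f xs) sums S"
proof -
  have "bij_betw (\<lambda>xs. (nat (prod_list xs), xs)) (lists {2..}) (Sigma {1..} factorisations)"
  proof (rule bij_betw_byWitness[where f' = snd])
    show "(\<lambda>xs. (nat (prod_list xs), xs)) ` lists {2..} \<subseteq> Sigma {1..} factorisations"
    proof (rule image_subsetI)
      fix xs :: "int list" assume xs: "xs \<in> lists {2..}"
      have "(1::int) \<le> 2 ^ length xs"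
        by simp
      also have "\<dots> \<le> prod_list xs"
        using xs by (intro two_power_length_le_prod_list) (auto simp: in_lists_conv_set)
      finally show "(nat (prod_list xs), xs) \<in> Sigma {1..} factorisations"
        using xs by (simp add: factorisations_def)
    qed
  qed (auto simp: factorisations_def)
  from has_sum_reindex_bij_betw[OF this, of "\<lambda>(n, xs). f xs"]
  have "((\<lambda>(n, xs). f xs) has_sum S) (Sigma {1..} factorisations)"
    using assms by simp
  then have "((\<lambda>n. \<Sum>xs\<in>factorisations n. f xs) has_sum S) {1..}"
    by (rule has_sum_Sigma'[where f = "\<lambda>(n, xs). f xs"]) (simp add: has_sum_finite finite_factorisations)
  moreover have "bij_betw Suc UNIV {1..}"
    by (rule bij_betw_byWitness[where f' = "\<lambda>n. n - 1"]) auto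
  note has_sum_reindex_bij_betw[OF this, of "\<lambda>n. \<Sum>xs\<in>factorisations n. f xs" S]
  ultimately have "((\<lambda>n. \<Sum>xs\<in>factorisations (Suc n). f xs) has_sum S) UNIV"
    by simp
  then show ?thesis
    by (rule has_sum_imp_sums)
qed

lemma has_sum_of_int_from_2:
  fixes g :: "int \<Rightarrow> 'a::banach"
  assumes "summable (\<lambda>n. norm (g (int n + 2)))" and "(\<lambda>n. g (int n + 2)) sums S"
  shows "(g has_sum S) {2..}"
proof -
  have "bij_betw (\<lambda>n. int n + 2) UNIV {2..}"
    by (rule bij_betw_byWitness[where f' = "\<lambda>m. nat (m - 2)"]) auto
  from has_sum_reindex_bij_betw[OF this, of g S] show ?thesis
    using norm_summable_imp_has_sum[OF assms] by simp
qed

lemma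
  fixes z :: complex
  assumes "Re z > 1"
  shows has_sum_powr_zeta_minus_1: "((\<lambda>m::int. of_int m powr (-z)) has_sum zeta z - 1) {2..}"
    and has_sum_norm_powr_zeta_minus_1:
      "((\<lambda>m::int. norm (of_int m powr (-z))) has_sum (\<Sum>n. real (n + 2) powr (- Re z))) {2..}"
proof -
  define f where "f n = 1 / (of_nat n :: complex) powr z" for n
  have f_eq: "f (Suc (Suc n)) = (of_nat n + 2) powr (-z)" for n
    by (simp add: f_def powr_minus_divide add.commute)
  have norm_f: "norm (f n) = real n powr (- Re z)" for n
    by (simp add: f_def norm_divide norm_inverse norm_powr_real_powr powr_minus divide_inverse)
  have "summable (\<lambda>n. real n powr (- Re z))"
    using assms by (simp add: summable_real_powr_iff)
  then have summable: "summable (\<lambda>n. norm (f (n + k)))" for k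
    unfolding norm_f by (subst summable_iff_shift)
  moreover have "zeta z = (\<Sum>n. f (Suc n))"
    by (simp add: zeta_def f_def del: of_nat_Suc)
  ultimately have "(\<lambda>n. f (Suc n)) sums zeta z"
    using summable_sums[OF summable_norm_cancel[OF summable[of 1]]] by simp
  then have "(\<lambda>n. f (Suc (Suc n))) sums (zeta z - 1)"
    using sums_Suc_iff[of "\<lambda>n. f (Suc n)" "zeta z - 1"] by (simp add: f_def)
  then show "((\<lambda>m::int. of_int m powr (-z)) has_sum zeta z - 1) {2..}"
    using summable[of 2] by (intro has_sum_of_int_from_2) (simp_all add: f_eq)
  have "norm ((of_nat n + 2 :: complex) powr (-z)) = real (n + 2) powr (- Re z)" for n
    using norm_f[of "Suc (Suc n)"] by (simp add: f_eq)
  then show "((\<lambda>m::int. norm (of_int m powr (-z))) has_sum (\<Sum>n. real (n + 2) powr (- Re z))) {2..}"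
    using summable[of 2] by (intro has_sum_of_int_from_2) (simp_all add: summable_sums f_eq)
qed

lemma sum_powr_from_2_le:
  assumes "\<sigma> \<ge> 10"
  shows "(\<Sum>n. real (n + 2) powr (- \<sigma>)) \<le> 1/128"
proof -
  have squares: "(\<lambda>n. 1 / (2 + real n)^2) sums (pi^2/6 - 1)"
    using sums_Suc_iff[of "\<lambda>n. 1 / (1 + real n)^2" "pi^2/6 - 1"] inverse_squares_sums by simp
  have term_le: "real (n + 2) powr (- \<sigma>) \<le> 1/256 * (1 / (2 + real n)^2)" for n
  proof -
    have "real (n + 2) powr (- \<sigma>) = real (n + 2) powr (- (\<sigma> - 2)) * real (n + 2) powr (-2)"
      by (simp flip: powr_add)
    also have "real (n + 2) powr (- (\<sigma> - 2)) \<le> 2 powr (- (\<sigma> - 2))"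
      using assms by (intro powr_mono2') auto
    also have "2 powr (- (\<sigma> - 2)) \<le> (2::real) powr (-8)"
      using assms by (intro powr_mono) auto
    also have "real (n + 2) powr (-2) = 1 / (2 + real n)^2"
      by (simp add: powr_minus divide_inverse add.commute)
    finally show ?thesis
      by (simp add: powr_minus)
  qed
  have summable: "summable (\<lambda>n. 1/256 * (1 / (2 + real n)^2))"
    using squares by (intro summable_mult sums_summable)
  have "(\<Sum>n. real (n + 2) powr (- \<sigma>)) \<le> (\<Sum>n. 1/256 * (1 / (2 + real n)^2))"
  proof (rule suminf_le)
    show "summable (\<lambda>n. real (n + 2) powr (- \<sigma>))"
      using term_le by (intro summable_comparison_test'[OF summable, where N = 0]) simp
  qed (use term_le summable in auto)
  also have "\<dots> = 1/256 * (pi^2/6 - 1)"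
    by (rule sums_unique[symmetric]) (rule sums_mult[OF squares])
  also have "\<dots> \<le> 1/128"
    using pi_less_4 pi_gt3 power_strict_mono[of pi 4 2] by simp
  finally show ?thesis .
qed

lemma prod_list_powr:
  assumes "set xs \<subseteq> {2..}"
  shows "prod_list (map (\<lambda>m. of_int m powr (z::complex)) xs) = of_int (prod_list xs) powr z"
  using assms
proof (induction xs)
  case (Cons y ys)
  have "(1::int) \<le> 2 ^ length ys"
    by simp
  also have "\<dots> \<le> prod_list ys"
    using Cons.prems by (intro two_power_length_le_prod_list) simp
  finally have "prod_list ys \<ge> 1" .
  moreover have "y \<ge> 2" using Cons.prems by simp
  ultimately show ?case
    using Cons by (simp add: powr_times_real)
qed simp

lemma sum_factorisations_powr:
  assumes "n \<ge> 1"
  shows "(\<Sum>xs\<in>factorisations n. weight_fps $ length xs * prod_list (map (\<lambda>m. of_int m powr (-z)) xs))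
    = of_int (a n) / of_nat n powr z"
proof -
  have "(\<Sum>xs\<in>factorisations n. weight_fps $ length xs * prod_list (map (\<lambda>m. of_int m powr (-z)) xs))
      = (\<Sum>xs\<in>factorisations n. of_int (length_weight (length xs)) * of_nat n powr (-z))"
  proof (intro sum.cong refl)
    fix xs assume "xs \<in> factorisations n"
    then have "set xs \<subseteq> {2..}" and "prod_list xs = int n"
      by (auto simp: factorisations_def in_lists_conv_set)
    then show "weight_fps $ length xs * prod_list (map (\<lambda>m. of_int m powr (-z)) xs) =
        of_int (length_weight (length xs)) * of_nat n powr (-z)"
      by (simp add: weight_fps_def prod_list_powr)
  qed
  also have "\<dots> = of_int (a n) / of_nat n powr z"
    using a_eq_sum_factorisations[OF assms]
    by (simp add: powr_minus_divide sum_divide_distrib)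
  finally show ?thesis .
qed

lemma phi_eq_eval_weight_fps:
  assumes "Re z \<ge> 10"
  shows "phi z = eval_fps weight_fps (zeta z - 1)"
proof -
  define N where "N = (\<Sum>n. real (n + 2) powr (- Re z))"
  have "N \<le> 1/128"
    unfolding N_def using assms by (rule sum_powr_from_2_le)
  then have "ereal N < ereal (1/32)"
    by simp
  then have "ereal N < fps_conv_radius weight_fps"
    using weight_fps_conv_radius by (rule less_le_trans)
  with assms have "((\<lambda>xs. weight_fps $ length xs * prod_list (map (\<lambda>m. of_int m powr (-z)) xs))
      has_sum eval_fps weight_fps (zeta z - 1)) (lists {2..})"
    by (intro has_sum_fps_nth_length_prod_list has_sum_powr_zeta_minus_1)
      (use has_sum_norm_powr_zeta_minus_1 N_def in auto)
  then have "(\<lambda>n. \<Sum>xs\<in>factorisations (Suc n).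
      weight_fps $ length xs * prod_list (map (\<lambda>m. of_int m powr (-z)) xs))
      sums eval_fps weight_fps (zeta z - 1)"
    by (rule has_sum_lists_imp_sums_factorisations)
  moreover have "(\<Sum>xs\<in>factorisations (Suc n).
      weight_fps $ length xs * prod_list (map (\<lambda>m. of_int m powr (-z)) xs)) =
      of_int (a (Suc n)) / of_nat (Suc n) powr z" for n
    by (rule sum_factorisations_powr) simp
  ultimately have "(\<lambda>n. of_int (a (Suc n)) / of_nat (Suc n) powr z) sums eval_fps weight_fps (zeta z - 1)"
    by (simp only:)
  then show ?thesis
    unfolding phi_def by (rule sums_unique[symmetric])
qed

lemma norm_zeta_minus_1_le:
  assumes "Re z \<ge> 10"
  shows "norm (zeta z - 1) \<le> 1/128"
proof -
  have "Re z > 1" using assms by simp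
  from norm_has_sum_bound[OF has_sum_norm_powr_zeta_minus_1[OF this] has_sum_powr_zeta_minus_1[OF this]]
  show ?thesis
    using sum_powr_from_2_le[OF assms] by linarith
qed

lemma zeta_phi_quadratic_Re_ge_10:
  assumes "Re z \<ge> 10"
  shows "(zeta z - 1) * phi z ^ 2 + zeta z * phi z - zeta z * (zeta z - 1) = 0"
proof -
  have "ereal (norm (zeta z - 1)) < ereal (1/32)"
    using norm_zeta_minus_1_le[OF assms] by simp
  then have "ereal (norm (zeta z - 1)) < fps_conv_radius weight_fps"
    using weight_fps_conv_radius by (rule less_le_trans)
  from eval_weight_fps_quadratic[OF this]
  have "(zeta z - 1) * phi z ^ 2 + (1 + (zeta z - 1)) * phi z - (zeta z - 1) * (1 + (zeta z - 1)) = 0"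
    by (simp only: phi_eq_eval_weight_fps[OF assms])
  then show ?thesis
    by (simp add: ac_simps)
qed

theorem theorem10p2:
  fixes s :: complex
  assumes "ereal (Re s) > max 1 sigma_c"
  shows "(zeta s - 1) * (phi s)^2 + zeta s * phi s - zeta s * (zeta s - 1) = 0"
proof -
  have "Re s > 1" and "sigma_c < ereal (Re s)"
    using assms by simp_all
  then obtain s0 where s0: "summable (\<lambda>n. of_int (a (Suc n)) / (of_nat (Suc n) :: complex) powr s0)"
    and "Re s0 < Re s"
    unfolding sigma_c_def by (auto simp: Inf_less_iff)
  define \<rho> where "\<rho> = (max 1 (Re s0) + Re s) / 2"
  have "\<rho> > 1" and "\<rho> > Re s0" and "Re s > \<rho>"
    using \<open>Re s > 1\<close> \<open>Re s0 < Re s\<close> by (auto simp: \<rho>_def)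
  have "phi holomorphic_on {z. Re z > \<rho>}"
    using dirichlet_series_holomorphic[OF s0] unfolding phi_def
    by (rule holomorphic_on_subset) (use \<open>\<rho> > Re s0\<close> in auto)
  moreover have "zeta holomorphic_on {z. Re z > \<rho>}"
    using \<open>\<rho> > 1\<close> by (rule zeta_holomorphic)
  ultimately have "(\<lambda>z. (zeta z - 1) * (phi z)^2 + zeta z * phi z - zeta z * (zeta z - 1))
      holomorphic_on {z. Re z > \<rho>}"
    by (intro holomorphic_intros)
  then show ?thesis
    using zeta_phi_quadratic_Re_ge_10 \<open>Re s > \<rho>\<close> by (rule holomorphic_on_halfplane_eq_0)
qed

end
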